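(* Let $\mathcal H$ be a cycle-reset SHS and let $L^{\mathsf{SR}}=\{(\ell,\ell')\in L^2:$ there is at least one edge from $\ell$ to $\ell'$ and every edge $(\ell,a,\ell')\in E$ is strongly reset$\}$. Then for every initial distribution $\nu$ on $S_{\mathcal H}$, $$\mathbb P^{\mathcal T_{\mathcal H}}_\nu\Big(\bigvee_{(\ell,\ell')\in L^{\mathsf{SR}}}\mathbf{GF}(\ell\wedge\mathbf X\ell')\Big)=1,$$ where $\mathbf{GF}(\ell\wedge\mathbf X\ell')$ is the set of runs $s_0s_1\ldots$ such that for infinitely many $k$, $s_k\in\{\ell\}\times\mathbb R^n$ and $s_{k+1}\in\{\ell'\}\times\mathbb R^n$.
   Context: Stochastic hybrid system (SHS) with $n$ variables: finite set $L$ of locations; finite set $E$ of edges $e=(\ell,a,\ell')$; invariants, flows $\gamma_\ell$, guards $\mathcal G(e)$ and reset maps $\mathcal R_e$; states $S_{\mathcal H}=L\times\mathbb R^n$. Probabilistic data: delay distributions $\mu_s$ on $\mathbb R^+$, edge distributions $w_{s'}$ over enabled edges, reset distributions $\eta_e(\mathbf v)$ on $\mathbb R^n$. The STS $\mathcal T_{\mathcal H}$ has kernel $\kappa((\ell,\mathbf v),\{\ell'\}\times D)=\int\sum_{e=(\ell,a,\ell')}w_{s+\tau}(e)\,\eta_e(\gamma_\ell(\mathbf v,\tau))(D)\,d\mu_s(\tau)$ where $s=(\ell,\mathbf v)$, $s+\tau=(\ell,\gamma_\ell(\mathbf v,\tau))$; in particular each step of a run follows an edge of $E$. An edge $e$ is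 strongly reset if $\eta_e(\mathbf v)$ is independent of $\mathbf v$. $\mathcal H$ is cycle-reset if every cycle of the directed graph on $L$ with an arc $\ell\to\ell'$ whenever some edge from $\ell$ to $\ell'$ exists contains an arc $\ell\to\ell'$ such that all edges from $\ell$ to $\ell'$ are strongly reset. $\mathbb P^{\mathcal T_{\mathcal H}}_\nu$ is the induced probability measure on runs. *)

theory Defs
  imports "HOL-Probability.Probability"
begin

type_synonym ('l, 'a) edge = "'l \<times> 'a \<times> 'l"
type_synonym ('l, 'n) state = "'l \<times> (real ^ 'n)"

definition src :: "('l, 'a) edge \<Rightarrow> 'l" where "src e = fst e"
definition tgt :: "('l, 'a) edge \<Rightarrow> 'l" where "tgt e = snd (snd e)"

definition state_measure :: "('l, 'n::finite) state measure" where
  "state_measure = count_space UNIV \<Otimes>\<^sub>M borel"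

definition enabled :: "('l, 'a) edge set \<Rightarrow> (('l, 'a) edge \<Rightarrow> (real ^ 'n) set)
    \<Rightarrow> ('l, 'n) state \<Rightarrow> ('l, 'a) edge set" where
  "enabled E G s = {e \<in> E. src e = fst s \<and> snd s \<in> G e}"

text \<open>Standing assumptions on the (probabilistic) data of an SHS.
  gamma: flows, G: guards, R: reset maps, mu: delay distributions,
  w: edge distributions, eta: reset distributions.\<close>
definition is_SHS ::
  "('l, 'a) edge set \<Rightarrow> ('l \<Rightarrow> real ^ 'n \<Rightarrow> real \<Rightarrow> real ^ 'n)
   \<Rightarrow> (('l, 'a) edge \<Rightarrow> (real ^ 'n) set) \<Rightarrow> (('l, 'a) edge \<Rightarrow> real ^ 'n \<Rightarrow> (real ^ 'n) set)
   \<Rightarrow> (('l, 'n) state \<Rightarrow> real measure) \<Rightarrow> (('l, 'n) state \<Rightarrow> ('l, 'a) edge \<Rightarrow> real)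
   \<Rightarrow> (('l, 'a) edge \<Rightarrow> real ^ 'n \<Rightarrow> (real ^ 'n) measure) \<Rightarrow> bool" where
  "is_SHS E \<gamma> G R \<mu> w \<eta> \<longleftrightarrow>
     finite E \<and>
     (\<forall>s. prob_space (\<mu> s) \<and> sets (\<mu> s) = sets borel \<and> (AE \<tau> in \<mu> s. 0 \<le> \<tau>)) \<and>
     (\<forall>s e. 0 \<le> w s e) \<and>
     (\<forall>s e. w s e \<noteq> 0 \<longrightarrow> e \<in> enabled E G s) \<and>
     (\<forall>s. enabled E G s \<noteq> {} \<longrightarrow> (\<Sum>e\<in>enabled E G s. w s e) = 1) \<and>
     (\<forall>e v. prob_space (\<eta> e v) \<and> sets (\<eta> e v) = sets borel \<and> (AE x in \<eta> e v. x \<in> R e v))"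

definition shs_kernel_val ::
  "('l, 'a) edge set \<Rightarrow> ('l \<Rightarrow> real ^ 'n \<Rightarrow> real \<Rightarrow> real ^ 'n)
   \<Rightarrow> (('l, 'n) state \<Rightarrow> real measure) \<Rightarrow> (('l, 'n) state \<Rightarrow> ('l, 'a) edge \<Rightarrow> real)
   \<Rightarrow> (('l, 'a) edge \<Rightarrow> real ^ 'n \<Rightarrow> (real ^ 'n) measure)
   \<Rightarrow> ('l, 'n) state \<Rightarrow> 'l \<Rightarrow> (real ^ 'n) set \<Rightarrow> real" where
  "shs_kernel_val E \<gamma> \<mu> w \<eta> s l' D =
     (\<integral>\<tau>. (\<Sum>e\<in>{e \<in> E. src e = fst s \<and> tgt e = l'}.
              w (fst s, \<gamma> (fst s) (snd s) \<tau>) e * measure (\<eta> e (\<gamma> (fst s) (snd s) \<tau>)) D) \<partial>\<mu> s)"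

definition strongly_reset :: "(('l, 'a) edge \<Rightarrow> real ^ 'n \<Rightarrow> (real ^ 'n) measure) \<Rightarrow> ('l, 'a) edge \<Rightarrow> bool" where
  "strongly_reset \<eta> e \<longleftrightarrow> (\<forall>v v'. \<eta> e v = \<eta> e v')"

definition loc_arc :: "('l, 'a) edge set \<Rightarrow> 'l \<Rightarrow> 'l \<Rightarrow> bool" where
  "loc_arc E l l' \<longleftrightarrow> (\<exists>e\<in>E. src e = l \<and> tgt e = l')"

definition SR_pairs :: "('l, 'a) edge set \<Rightarrow> (('l, 'a) edge \<Rightarrow> real ^ 'n \<Rightarrow> (real ^ 'n) measure) \<Rightarrow> ('l \<times> 'l) set" where
  "SR_pairs E \<eta> = {(l, l'). loc_arc E l l' \<and> (\<forall>e\<in>E. src e = l \<and> tgt e = l' \<longrightarrow> strongly_reset \<eta> e)}"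

definition cycle_reset :: "('l, 'a) edge set \<Rightarrow> (('l, 'a) edge \<Rightarrow> real ^ 'n \<Rightarrow> (real ^ 'n) measure) \<Rightarrow> bool" where
  "cycle_reset E \<eta> \<longleftrightarrow>
     (\<forall>xs. xs \<noteq> [] \<and> (\<forall>i<length xs. loc_arc E (xs ! i) (xs ! (Suc i mod length xs))) \<longrightarrow>
        (\<exists>i<length xs. (xs ! i, xs ! (Suc i mod length xs)) \<in> SR_pairs E \<eta>))"

text \<open>Finite-dimensional distributions of the Markov chain with kernel K:
  fdd K A j m s = probability, starting in s at time j, that s_j in A j, ..., s_(j+m) in A (j+m).\<close>
fun fdd :: "('s \<Rightarrow> 's measure) \<Rightarrow> (nat \<Rightarrow> 's set) \<Rightarrow> nat \<Rightarrow> nat \<Rightarrow> 's \<Rightarrow> real" where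
  "fdd K A j 0 s = indicator (A j) s"
| "fdd K A j (Suc m) s = indicator (A j) s * (\<integral>t. fdd K A (Suc j) m t \<partial>K s)"

definition markov_run_measure :: "'s measure \<Rightarrow> ('s \<Rightarrow> 's measure) \<Rightarrow> 's measure \<Rightarrow> 's stream measure \<Rightarrow> bool" where
  "markov_run_measure S K \<nu> P \<longleftrightarrow>
     prob_space P \<and> sets P = sets (stream_space S) \<and>
     (\<forall>m A. (\<forall>i. A i \<in> sets S) \<longrightarrow>
        measure P {\<omega> \<in> space P. \<forall>i\<le>m. \<omega> !! i \<in> A i} = (\<integral>s. fdd K A 0 m s \<partial>\<nu>))"

end

theory Submission
  imports Defs
begin

text \<open>Locations form a finite graph and, almost surely, every step of a run follows an arc
  of it, because the kernel gives probability zero to a jump between locations without an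
  edge. An infinite path in a finite graph eventually stays inside the arcs it uses
  infinitely often, and if none of them were strongly reset, a repetition of a location
  after that point would close a cycle without a strongly reset arc.\<close>

lemma not_inj_on_atLeast:
  fixes f :: "nat \<Rightarrow> 'a::finite"
  obtains i j where "T \<le> i" "i < j" "f i = f j"
proof -
  have "\<not> inj_on f {T..}"
    using finite_imageD[of f "{T..}"] infinite_Ici[of T] by auto
  then show ?thesis
    using that unfolding inj_on_def by (metis atLeast_iff linorder_neqE_nat)
qed

lemma path_INFM_arc_meeting_all_cycles:
  fixes f :: "nat \<Rightarrow> 'a::finite"
  assumes path: "\<And>k. adj (f k) (f (Suc k))"
    and cycles: "\<And>xs. xs \<noteq> [] \<Longrightarrow> \<forall>i<length xs. adj (xs ! i) (xs ! (Suc i mod length xs)) \<Longrightarrow>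
        \<exists>i<length xs. (xs ! i, xs ! (Suc i mod length xs)) \<in> S"
  shows "\<exists>(x, y)\<in>S. INFM k. f k = x \<and> f (Suc k) = y"
proof (rule ccontr)
  assume "\<not> ?thesis"
  then have "\<forall>p\<in>S. MOST k. (f k, f (Suc k)) \<noteq> p" by auto
  then have "MOST k. \<forall>p\<in>S. (f k, f (Suc k)) \<noteq> p"
    by (intro eventually_ball_finite) auto
  then obtain T where T: "\<And>k. T \<le> k \<Longrightarrow> (f k, f (Suc k)) \<notin> S"
    by (auto simp: MOST_nat_le)
  obtain i j where ij: "T \<le> i" "i < j" "f i = f j"
    using not_inj_on_atLeast .
  define xs where "xs = map f [i..<j]"
  have len: "length xs = j - i" by (simp add: xs_def)
  have this_xs: "xs ! d = f (i + d)" if "d < j - i" for d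
    using that by (simp add: xs_def)
  have next_xs: "xs ! (Suc d mod length xs) = f (Suc (i + d))" if "d < j - i" for d
  proof (cases "Suc d < j - i")
    case True
    then show ?thesis using this_xs len by simp
  next
    case False
    then have "Suc d = j - i" "Suc (i + d) = j" using that by simp_all
    then show ?thesis using this_xs[of 0] len ij by simp
  qed
  have "\<forall>d<length xs. adj (xs ! d) (xs ! (Suc d mod length xs))"
    using this_xs next_xs len path by simp
  moreover have "xs \<noteq> []" using len ij by auto
  ultimately obtain d where "d < length xs" "(xs ! d, xs ! (Suc d mod length xs)) \<in> S"
    using cycles by blast
  then have "(f (i + d), f (Suc (i + d))) \<in> S" using this_xs next_xs len by simp
  with T[of "i + d"] ij show False by simp
qed

lemma markov_run_AE_no_transition:
  assumes P: "markov_run_measure S K \<nu> P"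
    and A: "A \<in> sets S" and B: "B \<in> sets S"
    and K: "\<And>s. s \<in> A \<Longrightarrow> sets (K s) = sets S \<and> measure (K s) B = 0"
  shows "AE \<omega> in P. \<not> (\<omega> !! k \<in> A \<and> \<omega> !! Suc k \<in> B)"
proof -
  have prob_P: "prob_space P" and sets_P: "sets P = sets (stream_space S)"
    and fdd_P: "\<And>m C. (\<forall>i. C i \<in> sets S) \<Longrightarrow>
        measure P {\<omega> \<in> space P. \<forall>i\<le>m. \<omega> !! i \<in> C i} = (\<integral>s. fdd K C 0 m s \<partial>\<nu>)"
    using P unfolding markov_run_measure_def by auto
  have space_P: "space P = streams (space S)"
    using sets_eq_imp_space_eq[OF sets_P] by (simp add: space_stream_space)
  define C where "C i = (if i = k then A else if i = Suc k then B else space S)" for i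
  have C_sets: "\<forall>i. C i \<in> sets S"
    using A B by (simp add: C_def)
  have fdd_k: "fdd K C k (Suc 0) s = 0" for s
  proof (cases "s \<in> A")
    case True
    have "fdd K C (Suc k) 0 = indicator B"
      by (rule ext) (simp add: C_def)
    moreover have "(\<integral>t. indicator B t \<partial>K s) = measure (K s) B"
      using K[OF True] B by simp
    ultimately show ?thesis using K[OF True] by simp
  qed (simp add: C_def)
  have fdd_vanish: "j + m = Suc k \<Longrightarrow> j \<le> k \<Longrightarrow> fdd K C j m s = 0" for j m s
  proof (induction m arbitrary: j s)
    case (Suc m)
    show ?case
    proof (cases "j = k")
      case True
      then show ?thesis using Suc.prems fdd_k by simp
    next
      case False
      then have "fdd K C (Suc j) m = (\<lambda>_. 0)" using Suc by fastforce
      then show ?thesis by simp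
    qed
  qed simp
  have event: "{\<omega> \<in> space P. \<forall>i\<le>Suc k. \<omega> !! i \<in> C i}
      = {\<omega> \<in> space P. \<omega> !! k \<in> A \<and> \<omega> !! Suc k \<in> B}"
    by (auto simp: C_def space_P streams_iff_snth)
  have "(\<integral>s. fdd K C 0 (Suc k) s \<partial>\<nu>) = 0"
    using fdd_vanish[of 0 "Suc k"] by (simp del: fdd.simps)
  then have "measure P {\<omega> \<in> space P. \<omega> !! k \<in> A \<and> \<omega> !! Suc k \<in> B} = 0"
    using fdd_P[OF C_sets, of "Suc k"] event by simp
  moreover have "{\<omega> \<in> space P. \<omega> !! k \<in> A \<and> \<omega> !! Suc k \<in> B} \<in> sets P"
    unfolding sets_P sets_eq_imp_space_eq[OF sets_P] using A B by measurable
  ultimately show ?thesis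
    using finite_measure.emeasure_eq_measure[OF prob_space.finite_measure[OF prob_P]]
    by (subst AE_iff_measurable[OF _ refl]) auto
qed

lemma shs_kernel_val_no_arc:
  assumes "\<not> loc_arc E (fst s) l'"
  shows "shs_kernel_val E \<gamma> \<mu> w \<eta> s l' D = 0"
proof -
  have "{e \<in> E. src e = fst s \<and> tgt e = l'} = {}"
    using assms unfolding loc_arc_def by auto
  then show ?thesis unfolding shs_kernel_val_def by (simp only: sum.empty) simp
qed

lemma shs_run_AE_follows_arcs:
  fixes K :: "('l::finite, 'n::finite) state \<Rightarrow> ('l, 'n) state measure"
  assumes K_kernel: "K \<in> state_measure \<rightarrow>\<^sub>M prob_algebra state_measure"
    and K_eq: "\<And>s l' D. D \<in> sets borel \<Longrightarrow>
                  measure (K s) ({l'} \<times> D) = shs_kernel_val E \<gamma> \<mu> w \<eta> s l' D"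
    and P: "markov_run_measure state_measure K \<nu> P"
  shows "AE \<omega> in P. \<forall>k. loc_arc E (fst (\<omega> !! k)) (fst (\<omega> !! Suc k))"
proof -
  have space_S: "space (state_measure :: ('l, 'n) state measure) = UNIV"
    by (simp add: state_measure_def space_pair_measure)
  have sets_K: "sets (K s) = sets state_measure" for s
    using measurable_space[OF K_kernel, of s] space_S by (simp add: space_prob_algebra)
  have location_sets: "{l} \<times> UNIV \<in> sets (state_measure :: ('l, 'n) state measure)" for l :: 'l
    unfolding state_measure_def by (rule pair_measureI) auto
  have no_jump: "AE \<omega> in P. \<not> (fst (\<omega> !! k) = l \<and> fst (\<omega> !! Suc k) = l')"
    if "\<not> loc_arc E l l'" for k l l'
  proof -
    have "AE \<omega> in P. \<not> (\<omega> !! k \<in> {l} \<times> UNIV \<and> \<omega> !! Suc k \<in> {l'} \<times> UNIV)"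
      using sets_K K_eq[of UNIV _ l'] shs_kernel_val_no_arc[of E _ l'] that
      by (intro markov_run_AE_no_transition[OF P location_sets location_sets]) auto
    then show ?thesis by (simp add: mem_Times_iff)
  qed
  show ?thesis
  proof (rule AE_all_countable[THEN iffD2], rule allI)
    fix k
    have "AE \<omega> in P. \<forall>p\<in>{p. \<not> loc_arc E (fst p) (snd p)}.
            \<not> (fst (\<omega> !! k) = fst p \<and> fst (\<omega> !! Suc k) = snd p)"
      using no_jump by (intro AE_finite_allI) auto
    then show "AE \<omega> in P. loc_arc E (fst (\<omega> !! k)) (fst (\<omega> !! Suc k))"
      by eventually_elim auto
  qed
qed

lemma sets_INFM_location_pair:
  fixes S :: "('l::finite \<times> 'l) set"
  shows "{\<omega> \<in> space (stream_space (state_measure :: ('l, 'n::finite) state measure)).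
            \<exists>(l, l') \<in> S. INFM k. fst (\<omega> !! k) = l \<and> fst (\<omega> !! Suc k) = l'}
          \<in> sets (stream_space state_measure)"
proof -
  have "(\<lambda>\<omega>. fst (\<omega> !! k)) \<in> stream_space (state_measure :: ('l, 'n) state measure)
          \<rightarrow>\<^sub>M count_space UNIV" for k
    unfolding state_measure_def by measurable
  then show ?thesis
    unfolding INFM_nat_le by measurable
qed

theorem mainTheorem10:
  fixes E :: "('l::finite, 'a) edge set"
    and \<gamma> :: "'l \<Rightarrow> real ^ 'n::finite \<Rightarrow> real \<Rightarrow> real ^ 'n"
    and G :: "('l, 'a) edge \<Rightarrow> (real ^ 'n) set"
    and R :: "('l, 'a) edge \<Rightarrow> real ^ 'n \<Rightarrow> (real ^ 'n) set"
    and \<mu> :: "('l, 'n) state \<Rightarrow> real measure"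
    and w :: "('l, 'n) state \<Rightarrow> ('l, 'a) edge \<Rightarrow> real"
    and \<eta> :: "('l, 'a) edge \<Rightarrow> real ^ 'n \<Rightarrow> (real ^ 'n) measure"
    and K :: "('l, 'n) state \<Rightarrow> ('l, 'n) state measure"
    and \<nu> :: "('l, 'n) state measure"
    and P :: "('l, 'n) state stream measure"
  assumes shs: "is_SHS E \<gamma> G R \<mu> w \<eta>"
    and cyc: "cycle_reset E \<eta>"
    and K_kernel: "K \<in> state_measure \<rightarrow>\<^sub>M prob_algebra state_measure"
    and K_eq: "\<And>s l' D. D \<in> sets borel \<Longrightarrow>
                  measure (K s) ({l'} \<times> D) = shs_kernel_val E \<gamma> \<mu> w \<eta> s l' D"
    and nu: "prob_space \<nu>" "sets \<nu> = sets state_measure"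
    and P: "markov_run_measure state_measure K \<nu> P"
  shows "measure P {\<omega> \<in> space P. \<exists>(l, l') \<in> SR_pairs E \<eta>.
            INFM k. fst (\<omega> !! k) = l \<and> fst (\<omega> !! Suc k) = l'} = 1"
proof -
  have sets_P: "sets P = sets (stream_space state_measure)"
    using P by (simp add: markov_run_measure_def)
  have "AE \<omega> in P. \<forall>k. loc_arc E (fst (\<omega> !! k)) (fst (\<omega> !! Suc k))"
    using K_kernel K_eq P by (rule shs_run_AE_follows_arcs)
  then have "AE \<omega> in P. \<exists>(l, l') \<in> SR_pairs E \<eta>. INFM k. fst (\<omega> !! k) = l \<and> fst (\<omega> !! Suc k) = l'"
  proof eventually_elim
    case (elim \<omega>)
    then show ?case
      using cyc unfolding cycle_reset_def
      by (intro path_INFM_arc_meeting_all_cycles[where adj = "loc_arc E"]) auto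
  qed
  moreover have "{\<omega> \<in> space P. \<exists>(l, l') \<in> SR_pairs E \<eta>.
            INFM k. fst (\<omega> !! k) = l \<and> fst (\<omega> !! Suc k) = l'} \<in> sets P"
    using sets_INFM_location_pair[of "SR_pairs E \<eta>"] sets_P sets_eq_imp_space_eq[OF sets_P] by simp
  ultimately show ?thesis
    using prob_space.prob_Collect_eq_1[of P] P by (simp add: markov_run_measure_def)
qed

end
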